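(* Fix $\vartheta>0$ and let $D_n^{(\vartheta)}$ be the depth of the $n$-th inserted node in a Hoppe tree with parameter $\vartheta$. Then for all $n\geq 2$ $$D_n^{(\vartheta)}\stackrel{d}{=} 1 + \sum_{i=1}^{n-2} B_{i},$$ where $B_1,\ldots,B_{n-2}$ are independent random variables with $\mathbb{P}(B_i=1)=1-\mathbb{P}(B_i=0)= \frac{1}{\vartheta+i}$ for $i=1,\ldots,n-2$.
   Context: Hoppe tree with parameter $\vartheta>0$: the tree is grown by successive insertion of nodes, labelled $1,2,3,\ldots$ in order of insertion. Initially there is only the root (node $1$). In each step a parent node is chosen among the existing nodes, independently of the past, with probability proportional to its weight, where the root has weight $\vartheta$ and every other node has weight $1$; a new node is attached as a child of the chosen node. The Hoppe tree with $n$ nodes is the tree after $n-1$ insertions. The depth of a node is its distance (number of edges) to the root. *)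

theory Defs
  imports "HOL-Probability.Probability"
begin

text \<open>A (recursive) tree with nodes 1..m is encoded by a list par of length m-1:
  par ! (k-2) is the parent of node k, for k = 2..m.  Node 1 is the root.\<close>

definition parent_choice :: "real \<Rightarrow> nat \<Rightarrow> nat pmf" where
  "parent_choice \<theta> m = embed_pmf (\<lambda>j.
     if j = 1 then \<theta> / (\<theta> + real m - 1)
     else if 2 \<le> j \<and> j \<le> m then 1 / (\<theta> + real m - 1) else 0)"

fun hoppe_tree :: "real \<Rightarrow> nat \<Rightarrow> nat list pmf" where
  "hoppe_tree \<theta> 0 = return_pmf []"
| "hoppe_tree \<theta> (Suc 0) = return_pmf []"
| "hoppe_tree \<theta> (Suc (Suc k)) =
     bind_pmf (hoppe_tree \<theta> (Suc k))
       (\<lambda>par. map_pmf (\<lambda>j. par @ [j]) (parent_choice \<theta> (Suc k)))"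

text \<open>Depth of node k: follow parents until the root; fuel bounds the number of steps
  (parents have smaller labels, so fuel k suffices).\<close>
fun depth_aux :: "nat list \<Rightarrow> nat \<Rightarrow> nat \<Rightarrow> nat" where
  "depth_aux par 0 k = 0"
| "depth_aux par (Suc f) k = (if k \<le> 1 then 0 else Suc (depth_aux par f (par ! (k - 2))))"

definition depth :: "nat list \<Rightarrow> nat \<Rightarrow> nat" where
  "depth par k = depth_aux par k k"

end

theory Submission
  imports Defs
begin

text \<open>Write \<open>D\<^sub>m\<close> for the depth of node \<open>m\<close>. Among \<open>m + 1\<close> existing nodes, the parent
  of node \<open>m + 2\<close> is node \<open>m + 1\<close> with probability \<open>1 / (\<vartheta> + m)\<close>; otherwise it is
  distributed exactly like the parent of node \<open>m + 1\<close>, which it does not depend on. In the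
  first case the new depth is \<open>D\<^sub>m\<^sub>+\<^sub>1 + 1\<close>; in the second it is one more than the depth of an
  independent copy of the parent of node \<open>m + 1\<close>, which again has the law of \<open>D\<^sub>m\<^sub>+\<^sub>1\<close>.
  Hence \<open>D\<^sub>m\<^sub>+\<^sub>2\<close> has the law of \<open>D\<^sub>m\<^sub>+\<^sub>1 + B\<^sub>m\<close> with an independent Bernoulli variable
  \<open>B\<^sub>m\<close> of parameter \<open>1 / (\<vartheta> + m)\<close>, and \<open>D\<^sub>2 = 1\<close>.\<close>

definition parent_weight :: "real \<Rightarrow> nat \<Rightarrow> nat \<Rightarrow> real" where
  "parent_weight \<theta> m j = (if j = 1 then \<theta> / (\<theta> + real m - 1)
     else if 2 \<le> j \<and> j \<le> m then 1 / (\<theta> + real m - 1) else 0)"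

lemma nn_integral_parent_weight:
  assumes "\<theta> > 0" "m \<ge> 1"
  shows "(\<integral>\<^sup>+j. ennreal (parent_weight \<theta> m j) \<partial>count_space UNIV) = 1"
proof -
  have pos: "\<theta> + real m - 1 > 0" using assms by simp
  have "(\<integral>\<^sup>+j. ennreal (parent_weight \<theta> m j) \<partial>count_space UNIV) =
        ennreal (\<Sum>j\<in>{1..m}. parent_weight \<theta> m j)"
    using assms pos by (subst nn_integral_count_space'[where A = "{1..m}"])
      (auto simp: parent_weight_def intro!: sum_ennreal)
  also have "(\<Sum>j\<in>{1..m}. parent_weight \<theta> m j) = (\<Sum>j\<in>insert 1 {2..m}. parent_weight \<theta> m j)"
    using assms by (intro sum.cong) auto
  also have "\<dots> = \<theta> / (\<theta> + real m - 1) + (real m - 1) / (\<theta> + real m - 1)"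
    using assms by (simp add: parent_weight_def)
  also have "\<dots> = (\<theta> + real m - 1) / (\<theta> + real m - 1)"
    by (simp only: add_divide_distrib[symmetric] add_diff_eq)
  also have "\<dots> = 1" using pos by simp
  finally show ?thesis by simp
qed

lemma pmf_parent_choice:
  assumes "\<theta> > 0" "m \<ge> 1"
  shows "pmf (parent_choice \<theta> m) j = parent_weight \<theta> m j"
proof -
  have "parent_choice \<theta> m = embed_pmf (parent_weight \<theta> m)"
    unfolding parent_choice_def parent_weight_def ..
  moreover have "parent_weight \<theta> m j \<ge> 0" for j
    using assms by (simp add: parent_weight_def)
  ultimately show ?thesis
    using assms by (simp add: pmf_embed_pmf nn_integral_parent_weight)
qed

lemma set_pmf_parent_choice:
  assumes "\<theta> > 0" "m \<ge> 1" "j \<in> set_pmf (parent_choice \<theta> m)"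
  shows "1 \<le> j" "j \<le> m"
  using assms by (auto simp: set_pmf_iff pmf_parent_choice parent_weight_def split: if_splits)

lemma parent_weight_Suc:
  assumes "\<theta> > 0" "m \<ge> 1"
  shows "parent_weight \<theta> (Suc m) j = (if j = Suc m then 1 / (\<theta> + real m) else 0) +
     (1 - 1 / (\<theta> + real m)) * parent_weight \<theta> m j"
proof -
  have pos: "\<theta> + real m - 1 > 0" using assms by simp
  have "1 - 1 / (\<theta> + real m) = (\<theta> + real m - 1) / (\<theta> + real m)"
    using pos by (simp add: field_simps)
  then show ?thesis using pos assms by (auto simp: parent_weight_def)
qed

lemma parent_choice_Suc:
  assumes "\<theta> > 0" "m \<ge> 1"
  shows "parent_choice \<theta> (Suc m) = bind_pmf (bernoulli_pmf (1 / (\<theta> + real m)))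
          (\<lambda>b. if b then return_pmf (Suc m) else parent_choice \<theta> m)"
proof (rule pmf_eqI)
  fix j
  have "0 \<le> 1 / (\<theta> + real m)" "1 / (\<theta> + real m) \<le> 1" using assms by auto
  then show "pmf (parent_choice \<theta> (Suc m)) j = pmf (bind_pmf (bernoulli_pmf (1 / (\<theta> + real m)))
          (\<lambda>b. if b then return_pmf (Suc m) else parent_choice \<theta> m)) j"
    using assms by (simp add: pmf_bind pmf_parent_choice parent_weight_Suc indicator_def)
qed

definition is_parent_list :: "nat list \<Rightarrow> bool" where
  "is_parent_list par \<longleftrightarrow> (\<forall>i<length par. 1 \<le> par ! i \<and> par ! i \<le> Suc i)"

lemma is_parent_list_snoc:
  "is_parent_list par \<Longrightarrow> 1 \<le> j \<Longrightarrow> j \<le> Suc (length par) \<Longrightarrow> is_parent_list (par @ [j])"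
  by (auto simp: is_parent_list_def nth_append less_Suc_eq)

lemma depth_aux_append:
  "is_parent_list par \<Longrightarrow> k \<le> Suc (length par) \<Longrightarrow> depth_aux (par @ xs) f k = depth_aux par f k"
proof (induction f arbitrary: k)
  case (Suc f)
  show ?case
  proof (cases "k \<le> 1")
    case False
    then have "k - 2 < length par" using Suc.prems by auto
    then show ?thesis
      using False Suc by (auto simp: nth_append is_parent_list_def)
  qed simp
qed simp

lemma depth_aux_fuel_cong:
  "is_parent_list par \<Longrightarrow> k \<le> Suc (length par) \<Longrightarrow> k \<le> Suc f \<Longrightarrow> k \<le> Suc g \<Longrightarrow>
   depth_aux par f k = depth_aux par g k"
proof (induction f arbitrary: g k)
  case 0
  then show ?case by (cases g) auto
next
  case (Suc f)
  show ?case
  proof (cases "k \<le> 1")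
    case False
    with Suc.prems obtain g' where g: "g = Suc g'" by (cases g) auto
    have "k - 2 < length par" using Suc.prems False by auto
    then have "par ! (k - 2) \<le> k - 1" using Suc.prems(1) False by (auto simp: is_parent_list_def)
    then show ?thesis
      using Suc.prems False g Suc.IH[of "par ! (k - 2)" g'] by auto
  qed (cases g, simp_all)
qed

lemma depth_append:
  "is_parent_list par \<Longrightarrow> k \<le> Suc (length par) \<Longrightarrow> depth (par @ xs) k = depth par k"
  by (simp add: depth_def depth_aux_append)

lemma depth_snoc_last:
  assumes "is_parent_list par" "1 \<le> j" "j \<le> Suc (length par)"
  shows "depth (par @ [j]) (Suc (Suc (length par))) = Suc (depth par j)"
proof -
  have "depth (par @ [j]) (Suc (Suc (length par))) =
        Suc (depth_aux (par @ [j]) (Suc (length par)) j)"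
    by (simp add: depth_def)
  also have "depth_aux (par @ [j]) (Suc (length par)) j = depth_aux par (Suc (length par)) j"
    using assms by (intro depth_aux_append) auto
  also have "depth_aux par (Suc (length par)) j = depth par j"
    unfolding depth_def using assms by (intro depth_aux_fuel_cong) auto
  finally show ?thesis .
qed

lemma set_pmf_hoppe_tree:
  assumes "\<theta> > 0"
  shows "par \<in> set_pmf (hoppe_tree \<theta> (Suc m)) \<Longrightarrow> is_parent_list par \<and> length par = m"
proof (induction m arbitrary: par)
  case 0
  then show ?case by (simp add: is_parent_list_def)
next
  case (Suc m)
  then obtain q j where q: "q \<in> set_pmf (hoppe_tree \<theta> (Suc m))"
    and j: "j \<in> set_pmf (parent_choice \<theta> (Suc m))" and par: "par = q @ [j]"
    by auto
  show ?case
    using Suc.IH[OF q] set_pmf_parent_choice[OF assms _ j] par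
    by (auto intro: is_parent_list_snoc)
qed

lemma depth_last_hoppe_tree:
  assumes "\<theta> > 0"
  shows "map_pmf (\<lambda>par. depth par (Suc (Suc m))) (hoppe_tree \<theta> (Suc (Suc m))) =
    bind_pmf (hoppe_tree \<theta> (Suc m)) (\<lambda>q. map_pmf (\<lambda>j. Suc (depth q j)) (parent_choice \<theta> (Suc m)))"
proof -
  have "map_pmf (\<lambda>par. depth par (Suc (Suc m))) (hoppe_tree \<theta> (Suc (Suc m))) =
    bind_pmf (hoppe_tree \<theta> (Suc m))
      (\<lambda>q. map_pmf (\<lambda>j. depth (q @ [j]) (Suc (Suc m))) (parent_choice \<theta> (Suc m)))"
    by (simp add: map_bind_pmf pmf.map_comp o_def)
  also have "\<dots> = bind_pmf (hoppe_tree \<theta> (Suc m))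
      (\<lambda>q. map_pmf (\<lambda>j. Suc (depth q j)) (parent_choice \<theta> (Suc m)))"
  proof (intro bind_pmf_cong map_pmf_cong refl)
    fix q j
    assume q: "q \<in> set_pmf (hoppe_tree \<theta> (Suc m))"
      and j: "j \<in> set_pmf (parent_choice \<theta> (Suc m))"
    show "depth (q @ [j]) (Suc (Suc m)) = Suc (depth q j)"
      using set_pmf_hoppe_tree[OF assms q] set_pmf_parent_choice[OF assms _ j]
        depth_snoc_last[of q j] by auto
  qed
  finally show ?thesis .
qed

lemma depth_snoc_parent_choice:
  assumes "\<theta> > 0" "q \<in> set_pmf (hoppe_tree \<theta> (Suc k))"
  shows "bind_pmf (parent_choice \<theta> (Suc k))
           (\<lambda>j'. map_pmf (\<lambda>j. depth (q @ [j']) j) (parent_choice \<theta> (Suc (Suc k)))) =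
         bind_pmf (bernoulli_pmf (1 / (\<theta> + real (Suc k))))
           (\<lambda>b. map_pmf (\<lambda>j. depth q j + of_bool b) (parent_choice \<theta> (Suc k)))"
proof -
  define P where "P = parent_choice \<theta> (Suc k)"
  define B where "B = bernoulli_pmf (1 / (\<theta> + real (Suc k)))"
  have q: "is_parent_list q" "length q = k"
    using set_pmf_hoppe_tree[OF assms] by auto
  have "bind_pmf P (\<lambda>j'. map_pmf (\<lambda>j. depth (q @ [j']) j) (parent_choice \<theta> (Suc (Suc k)))) =
        bind_pmf P (\<lambda>j'. bind_pmf B (\<lambda>b.
          if b then return_pmf (Suc (depth q j')) else map_pmf (depth q) P))"
  proof (intro bind_pmf_cong refl)
    fix j' assume "j' \<in> set_pmf P"
    then have j': "1 \<le> j'" "j' \<le> Suc k"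
      using set_pmf_parent_choice[OF assms(1), of "Suc k"] unfolding P_def by auto
    have old_nodes: "map_pmf (\<lambda>j. depth (q @ [j']) j) P = map_pmf (depth q) P"
      using set_pmf_parent_choice(2)[OF assms(1), of "Suc k"] q unfolding P_def
      by (intro map_pmf_cong refl depth_append) auto
    have mix: "parent_choice \<theta> (Suc (Suc k)) =
          bind_pmf B (\<lambda>b. if b then return_pmf (Suc (Suc k)) else P)"
      unfolding B_def P_def using assms(1) by (intro parent_choice_Suc) auto
    show "map_pmf (\<lambda>j. depth (q @ [j']) j) (parent_choice \<theta> (Suc (Suc k))) =
          bind_pmf B (\<lambda>b. if b then return_pmf (Suc (depth q j')) else map_pmf (depth q) P)"
      unfolding mix map_bind_pmf
      using old_nodes depth_snoc_last[of q j'] q j' by (intro bind_pmf_cong refl) simp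
  qed
  also have "\<dots> = bind_pmf B (\<lambda>b. bind_pmf P (\<lambda>j'.
          if b then return_pmf (Suc (depth q j')) else map_pmf (depth q) P))"
    by (rule bind_commute_pmf)
  also have "\<dots> = bind_pmf B (\<lambda>b. map_pmf (\<lambda>j. depth q j + of_bool b) P)"
    by (intro bind_pmf_cong refl) (simp add: map_pmf_def bind_pmf_const)
  finally show ?thesis unfolding P_def B_def .
qed

lemma depth_last_hoppe_tree_Suc:
  assumes "\<theta> > 0"
  shows "map_pmf (\<lambda>par. depth par (Suc (Suc (Suc k)))) (hoppe_tree \<theta> (Suc (Suc (Suc k)))) =
    bind_pmf (bernoulli_pmf (1 / (\<theta> + real (Suc k))))
      (\<lambda>b. map_pmf (\<lambda>d. d + of_bool b)
         (map_pmf (\<lambda>par. depth par (Suc (Suc k))) (hoppe_tree \<theta> (Suc (Suc k)))))"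
proof -
  define T where "T = hoppe_tree \<theta> (Suc k)"
  define P where "P = parent_choice \<theta> (Suc k)"
  define B where "B = bernoulli_pmf (1 / (\<theta> + real (Suc k)))"
  have "map_pmf (\<lambda>par. depth par (Suc (Suc (Suc k)))) (hoppe_tree \<theta> (Suc (Suc (Suc k)))) =
        bind_pmf T (\<lambda>q. map_pmf Suc (bind_pmf P
          (\<lambda>j'. map_pmf (\<lambda>j. depth (q @ [j']) j) (parent_choice \<theta> (Suc (Suc k))))))"
    unfolding depth_last_hoppe_tree[OF assms]
    by (simp add: T_def P_def bind_map_pmf map_bind_pmf bind_assoc_pmf pmf.map_comp o_def)
  also have "\<dots> = bind_pmf T (\<lambda>q. map_pmf Suc
      (bind_pmf B (\<lambda>b. map_pmf (\<lambda>j. depth q j + of_bool b) P)))"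
    unfolding T_def P_def B_def using assms
    by (intro bind_pmf_cong refl) (simp add: depth_snoc_parent_choice)
  also have "\<dots> = bind_pmf B (\<lambda>b. bind_pmf T (\<lambda>q. map_pmf (\<lambda>j. Suc (depth q j) + of_bool b) P))"
    by (subst bind_commute_pmf) (simp add: map_bind_pmf pmf.map_comp o_def)
  also have "\<dots> = bind_pmf B (\<lambda>b. map_pmf (\<lambda>d. d + of_bool b)
         (map_pmf (\<lambda>par. depth par (Suc (Suc k))) (hoppe_tree \<theta> (Suc (Suc k)))))"
    unfolding depth_last_hoppe_tree[OF assms]
    by (simp add: T_def P_def map_bind_pmf pmf.map_comp o_def)
  finally show ?thesis unfolding B_def .
qed

lemma card_true_Pi_pmf_Suc:
  fixes Q :: "nat \<Rightarrow> bool pmf"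
  shows "map_pmf (\<lambda>B. card {i \<in> {1..Suc k}. B i}) (Pi_pmf {1..Suc k} False Q) =
    bind_pmf (Q (Suc k)) (\<lambda>b. map_pmf (\<lambda>d. d + of_bool b)
      (map_pmf (\<lambda>B. card {i \<in> {1..k}. B i}) (Pi_pmf {1..k} False Q)))"
proof -
  have card_upd: "card {i \<in> insert (Suc k) {1..k}. (B(Suc k := b)) i} =
      card {i \<in> {1..k}. B i} + of_bool b"
    for B :: "nat \<Rightarrow> bool" and b
  proof -
    have "{i \<in> insert (Suc k) {1..k}. (B(Suc k := b)) i} =
          (if b then insert (Suc k) {i \<in> {1..k}. B i} else {i \<in> {1..k}. B i})"
      by auto
    then show ?thesis by simp
  qed
  have "Pi_pmf (insert (Suc k) {1..k}) False Q =
     bind_pmf (Q (Suc k)) (\<lambda>b. bind_pmf (Pi_pmf {1..k} False Q) (\<lambda>B. return_pmf (B(Suc k := b))))"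
    by (rule Pi_pmf_insert') auto
  moreover have "{1..Suc k} = insert (Suc k) {1..k}" by auto
  ultimately show ?thesis
    by (simp only: map_pmf_def bind_assoc_pmf bind_return_pmf card_upd)
qed

lemma depth_last_hoppe_tree_distr:
  assumes "\<theta> > 0"
  shows "map_pmf (\<lambda>par. depth par (Suc (Suc k))) (hoppe_tree \<theta> (Suc (Suc k))) =
         map_pmf (\<lambda>B. 1 + card {i \<in> {1..k}. B i})
           (Pi_pmf {1..k} False (\<lambda>i. bernoulli_pmf (1 / (\<theta> + real i))))"
proof (induction k)
  case 0
  have "map_pmf (\<lambda>par. depth par (Suc (Suc 0))) (hoppe_tree \<theta> (Suc (Suc 0))) =
        map_pmf (\<lambda>j. Suc (depth [] j)) (parent_choice \<theta> (Suc 0))"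
    unfolding depth_last_hoppe_tree[OF assms] by (simp only: hoppe_tree.simps bind_return_pmf)
  also have "\<dots> = map_pmf (\<lambda>_. 1) (parent_choice \<theta> (Suc 0))"
  proof (rule map_pmf_cong[OF refl])
    fix j assume "j \<in> set_pmf (parent_choice \<theta> (Suc 0))"
    from set_pmf_parent_choice[OF assms _ this] have "j = 1" by auto
    then show "Suc (depth [] j) = 1" by (simp add: depth_def)
  qed
  finally show ?case by simp
next
  case (Suc k)
  define Q where "Q = (\<lambda>i. bernoulli_pmf (1 / (\<theta> + real i)))"
  have "map_pmf (\<lambda>par. depth par (Suc (Suc (Suc k)))) (hoppe_tree \<theta> (Suc (Suc (Suc k)))) =
        bind_pmf (Q (Suc k)) (\<lambda>b. map_pmf (\<lambda>d. d + of_bool b)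
          (map_pmf (\<lambda>B. 1 + card {i \<in> {1..k}. B i}) (Pi_pmf {1..k} False Q)))"
    unfolding depth_last_hoppe_tree_Suc[OF assms] Suc Q_def ..
  also have "\<dots> = map_pmf (\<lambda>d. 1 + d) (bind_pmf (Q (Suc k)) (\<lambda>b. map_pmf (\<lambda>d. d + of_bool b)
          (map_pmf (\<lambda>B. card {i \<in> {1..k}. B i}) (Pi_pmf {1..k} False Q))))"
    by (simp only: map_bind_pmf pmf.map_comp o_def add.assoc)
  also have "\<dots> = map_pmf (\<lambda>B. 1 + card {i \<in> {1..Suc k}. B i}) (Pi_pmf {1..Suc k} False Q)"
    unfolding card_true_Pi_pmf_Suc[symmetric] by (simp only: pmf.map_comp o_def)
  finally show ?case unfolding Q_def .
qed

theorem theorem2p1: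
  fixes \<theta> :: real and n :: nat
  assumes "\<theta> > 0" and "n \<ge> 2"
  shows "map_pmf (\<lambda>par. depth par n) (hoppe_tree \<theta> n) =
         map_pmf (\<lambda>B. 1 + card {i \<in> {1..n-2}. B i})
           (Pi_pmf {1..n-2} False (\<lambda>i. bernoulli_pmf (1 / (\<theta> + real i))))"
proof -
  obtain k where "n = Suc (Suc k)"
    using assms(2) by (metis add_2_eq_Suc le_Suc_ex)
  then show ?thesis
    using depth_last_hoppe_tree_distr[OF assms(1), of k] by simp
qed

end
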